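(* Let $k,\ell>0$ be real numbers and define $q_n=t_n-k$ and $r_n=t_n+\ell$ for all $n\ge0$. For complex $s$ with $\Re(s)>1$ put $\lambda(s;k,\ell)=2^s-\bigl(2^s(k-\ell)+(k+\ell)\bigr)$. Then for each $s$ with $\Re(s)>1$: (1) if $\lambda(s;k,\ell)=0$, then $\displaystyle\sum_{n\ge1}\frac{q_{n-1}}{n^s}=\frac{1-2^s}{1+2^s}\sum_{n\ge1}\frac{r_n}{n^s}$; (2) if $\lambda(s;k,\ell)=2^s$, then $\displaystyle(2^s+1)\sum_{n\ge1}\frac{q_{n-1}}{n^s}+(2^s-1)\sum_{n\ge1}\frac{r_n}{n^s}=2^s\zeta(s)$; (3) if $\lambda(s;k,\ell)=2^s-2$, then $\displaystyle(2^s+1)\sum_{n\ge1}\frac{q_{n-1}}{n^s}+(2^s-1)\sum_{n\ge1}\frac{r_n}{n^s}=2^s\eta(s)$.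
   Context: For $n\ge 0$, let $t_n\in\{0,1\}$ denote the sum of the binary digits of $n$ reduced modulo $2$ (so $t_0=0$; this is the Thue–Morse sequence). $\zeta(s)=\sum_{n\ge1}n^{-s}$ is the Riemann zeta function and $\eta(s)=\sum_{n\ge1}(-1)^{n-1}n^{-s}$ is the Dirichlet eta (alternating zeta) function, both for $\Re(s)>1$. *)

theory Defs
  imports "HOL-Analysis.Analysis"
begin

fun bin_digit_sum :: "nat \<Rightarrow> nat" where
  "bin_digit_sum n = (if n = 0 then 0 else n mod 2 + bin_digit_sum (n div 2))"

declare bin_digit_sum.simps[simp del]

definition thue_morse :: "nat \<Rightarrow> nat" where
  "thue_morse n = bin_digit_sum n mod 2"

text \<open>Riemann zeta and Dirichlet eta as Dirichlet series (meaningful for Re s > 1).\<close>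
definition zeta_series :: "complex \<Rightarrow> complex" where
  "zeta_series s = (\<Sum>n. 1 / (of_nat (Suc n) powr s))"

definition eta_series :: "complex \<Rightarrow> complex" where
  "eta_series s = (\<Sum>n. (-1) ^ n / (of_nat (Suc n) powr s))"

end

theory Submission
  imports Defs
begin

text \<open>
  Put \<open>A = \<Sum>\<^sub>n\<^sub>\<ge>\<^sub>1 t(n-1)/n^s\<close> and \<open>B = \<Sum>\<^sub>n\<^sub>\<ge>\<^sub>1 t(n)/n^s\<close>. Since \<open>t(2m) = t(m)\<close> and
  \<open>t(2m+1) = 1 - t(m)\<close>, the coefficient \<open>t(n-1) + t(n)\<close> of \<open>A + B\<close> is \<open>1\<close> at odd \<open>n\<close>
  and \<open>1 + (t(m) - t(m-1))\<close> at \<open>n = 2m\<close>. Splitting into even and odd indices gives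
  \<open>A + B = \<zeta>(s) + (B - A)/2^s\<close>, i.e. \<open>(2^s + 1) A + (2^s - 1) B = 2^s \<zeta>(s)\<close>.
  The two series of the theorem are \<open>A - k \<zeta>(s)\<close> and \<open>B + l \<zeta>(s)\<close>, so their
  combination is \<open>\<lambda>(s;k,l) \<zeta>(s)\<close>; the third case also uses \<open>2^s \<eta>(s) = (2^s - 2) \<zeta>(s)\<close>,
  which follows from the same even/odd splitting.
\<close>

lemma Bseq_add_Bseq:
  fixes f g :: "nat \<Rightarrow> 'a::real_normed_vector"
  assumes "Bseq f" "Bseq g"
  shows "Bseq (\<lambda>n. f n + g n)"
proof -
  obtain K L where "\<And>n. norm (f n) \<le> K" "\<And>n. norm (g n) \<le> L"
    using assms by (auto simp: Bseq_def)
  then show ?thesis by (intro BseqI'[of _ "K + L"]) (simp add: norm_triangle_le add_mono)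
qed

lemma Bseq_diff_Bseq:
  fixes f g :: "nat \<Rightarrow> 'a::real_normed_vector"
  shows "Bseq f \<Longrightarrow> Bseq g \<Longrightarrow> Bseq (\<lambda>n. f n - g n)"
  using Bseq_add_Bseq[of f "\<lambda>n. - g n"] by (simp add: Bseq_minus_iff)

lemma suminf_Suc_eq:
  fixes f :: "nat \<Rightarrow> 'a::real_normed_vector"
  assumes "f 0 = 0"
  shows "(\<Sum>n. f (Suc n)) = suminf f"
proof -
  have "(\<lambda>n. f (Suc n)) sums a \<longleftrightarrow> f sums a" for a
    using sums_Suc_iff[of f a] assms by simp
  then show ?thesis by (simp add: suminf_def)
qed

lemma sums_pairs: "f sums a \<Longrightarrow> (\<lambda>n. f (2 * n) + f (Suc (2 * n))) sums a"
  using sums_group[of f a 2] by (simp add: mult.commute)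

lemma norm_two_powr: "norm ((2::complex) powr s) = 2 powr Re s"
  by (simp add: norm_powr_real_powr)

text \<open>The coefficient \<open>f 0\<close> never contributes: \<open>0 powr s = 0\<close> and \<open>x / 0 = 0\<close>.\<close>

definition dirichlet_series :: "(nat \<Rightarrow> complex) \<Rightarrow> complex \<Rightarrow> complex" where
  "dirichlet_series f s = (\<Sum>n. f n / of_nat n powr s)"

lemma summable_dirichlet_series:
  assumes "Re s > 1" and "Bseq f"
  shows "summable (\<lambda>n. f n / of_nat n powr s)"
proof -
  obtain K where K: "\<And>n. norm (f n) \<le> K" using assms(2) by (auto simp: Bseq_def)
  have "summable (\<lambda>n. K * real n powr (- Re s))"
    using assms(1) by (intro summable_mult) (simp add: summable_real_powr_iff)
  moreover have "norm (f n / of_nat n powr s) \<le> K * real n powr (- Re s)" for n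
    using K[of n] by (simp add: norm_divide norm_powr_real_powr powr_minus_divide divide_right_mono)
  ultimately show ?thesis by (rule summable_comparison_test'[where N = 0])
qed

lemma dirichlet_series_sums:
  "Re s > 1 \<Longrightarrow> Bseq f \<Longrightarrow> (\<lambda>n. f n / of_nat n powr s) sums dirichlet_series f s"
  unfolding dirichlet_series_def by (rule summable_sums) (rule summable_dirichlet_series)

lemma dirichlet_series_conv_Suc:
  "(\<Sum>n. f (Suc n) / of_nat (Suc n) powr s) = dirichlet_series f s"
  unfolding dirichlet_series_def by (rule suminf_Suc_eq[where f = "\<lambda>n. f n / of_nat n powr s"]) simp

lemma dirichlet_series_add:
  "Re s > 1 \<Longrightarrow> Bseq f \<Longrightarrow> Bseq g \<Longrightarrow>
    dirichlet_series (\<lambda>n. f n + g n) s = dirichlet_series f s + dirichlet_series g s"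
  unfolding dirichlet_series_def add_divide_distrib
  by (intro suminf_add[symmetric] summable_dirichlet_series)

lemma dirichlet_series_diff:
  "Re s > 1 \<Longrightarrow> Bseq f \<Longrightarrow> Bseq g \<Longrightarrow>
    dirichlet_series (\<lambda>n. f n - g n) s = dirichlet_series f s - dirichlet_series g s"
  unfolding dirichlet_series_def diff_divide_distrib
  by (intro suminf_diff[symmetric] summable_dirichlet_series)

lemma dirichlet_series_cmult:
  "Re s > 1 \<Longrightarrow> Bseq f \<Longrightarrow> dirichlet_series (\<lambda>n. c * f n) s = c * dirichlet_series f s"
  unfolding dirichlet_series_def times_divide_eq_right[symmetric]
  by (intro suminf_mult summable_dirichlet_series)

lemma dirichlet_series_even_odd:
  assumes "Re s > 1" and "Bseq f" "Bseq g" "Bseq h"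
    and even: "\<And>n. n > 0 \<Longrightarrow> f (2 * n) = g (2 * n) + h n"
    and odd: "\<And>n. f (Suc (2 * n)) = g (Suc (2 * n))"
  shows "dirichlet_series f s = dirichlet_series g s + dirichlet_series h s / 2 powr s"
proof -
  let ?D = "\<lambda>f n. f n / of_nat n powr s"
  have "?D f (2 * n) + ?D f (Suc (2 * n)) = ?D g (2 * n) + ?D g (Suc (2 * n)) + ?D h n / 2 powr s" for n
  proof (cases "n = 0")
    case False
    have "of_nat (2 * n) powr s = 2 powr s * of_nat n powr s"
      by (simp add: powr_times_real)
    then show ?thesis using even[of n] odd[of n] False by (simp add: add_divide_distrib)
  qed (use odd[of 0] in simp)
  moreover have "(\<lambda>n. ?D g (2 * n) + ?D g (Suc (2 * n)) + ?D h n / 2 powr s)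
      sums (dirichlet_series g s + dirichlet_series h s / 2 powr s)"
    using assms(1,3,4) by (intro sums_add sums_pairs sums_divide dirichlet_series_sums)
  ultimately have "(\<lambda>n. ?D f (2 * n) + ?D f (Suc (2 * n)))
      sums (dirichlet_series g s + dirichlet_series h s / 2 powr s)" by simp
  then show ?thesis
    using sums_pairs[OF dirichlet_series_sums[OF assms(1,2)]] sums_unique2 by blast
qed

lemma zeta_series_conv_dirichlet_series: "zeta_series s = dirichlet_series (\<lambda>_. 1) s"
  using dirichlet_series_conv_Suc[of "\<lambda>_. 1" s] by (simp add: zeta_series_def)

lemma eta_series_conv_dirichlet_series:
  "eta_series s = dirichlet_series (\<lambda>n. (-1) ^ (n - 1)) s"
  using dirichlet_series_conv_Suc[of "\<lambda>n. (-1) ^ (n - 1)" s] by (simp add: eta_series_def)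

lemma dirichlet_series_const:
  "Re s > 1 \<Longrightarrow> dirichlet_series (\<lambda>_. c) s = c * zeta_series s"
  using dirichlet_series_cmult[of s "\<lambda>_. 1" c] by (simp add: zeta_series_conv_dirichlet_series)

lemma eta_series_eq_zeta_series:
  assumes "Re s > 1"
  shows "2 powr s * eta_series s = (2 powr s - 2) * zeta_series s"
proof -
  have "dirichlet_series (\<lambda>n. (-1) ^ (n - 1)) s
      = dirichlet_series (\<lambda>_. 1) s + dirichlet_series (\<lambda>_. -2) s / 2 powr s"
  proof (rule dirichlet_series_even_odd[OF assms])
    show "Bseq (\<lambda>n. (-1) ^ (n - 1) :: complex)"
      by (rule BseqI'[of _ 1]) (simp add: norm_power)
    show "(-1) ^ (2 * n - 1) = 1 + (-2 :: complex)" if "n > 0" for n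
      using that by (cases n) simp_all
  qed simp_all
  then show ?thesis
    by (simp add: dirichlet_series_const[OF assms] eta_series_conv_dirichlet_series field_simps)
qed

lemma bin_digit_sum_double: "bin_digit_sum (2 * n) = bin_digit_sum n"
  by (cases "n = 0") (simp, subst bin_digit_sum.simps, simp)

lemma bin_digit_sum_Suc_double: "bin_digit_sum (Suc (2 * n)) = Suc (bin_digit_sum n)"
  by (subst bin_digit_sum.simps) simp

lemma thue_morse_le_1: "thue_morse n \<le> 1"
  by (simp add: thue_morse_def)

lemma thue_morse_double: "thue_morse (2 * n) = thue_morse n"
  by (simp add: thue_morse_def bin_digit_sum_double)

lemma thue_morse_Suc_double: "thue_morse (Suc (2 * n)) = 1 - thue_morse n"
  unfolding thue_morse_def bin_digit_sum_Suc_double by presburger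

lemma Bseq_thue_morse: "Bseq (\<lambda>n. of_nat (thue_morse (g n)) :: complex)"
  unfolding thue_morse_def by (rule BseqI'[of _ 1]) simp

lemma thue_morse_dirichlet_relation:
  assumes "Re s > 1"
  defines "A \<equiv> dirichlet_series (\<lambda>n. of_nat (thue_morse (n - 1))) s"
      and "B \<equiv> dirichlet_series (\<lambda>n. of_nat (thue_morse n)) s"
  shows "(2 powr s + 1) * A + (2 powr s - 1) * B = 2 powr s * zeta_series s"
proof -
  let ?t = "\<lambda>n. of_nat (thue_morse n) :: complex"
  have bounded: "Bseq (\<lambda>n. ?t (n - 1))" "Bseq ?t"
    using Bseq_thue_morse[of "\<lambda>n. n - 1"] Bseq_thue_morse[of id] by simp_all
  have "dirichlet_series (\<lambda>n. ?t (n - 1) + ?t n) s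
      = dirichlet_series (\<lambda>_. 1) s + dirichlet_series (\<lambda>n. ?t n - ?t (n - 1)) s / 2 powr s"
  proof (rule dirichlet_series_even_odd[OF assms(1)])
    show "?t (2 * n - 1) + ?t (2 * n) = 1 + (?t n - ?t (n - 1))" if "n > 0" for n
    proof -
      have "2 * n - 1 = Suc (2 * (n - 1))" using that by simp
      then show ?thesis
        using thue_morse_le_1[of "n - 1"] by (simp add: thue_morse_double thue_morse_Suc_double)
    qed
    show "?t (Suc (2 * n) - 1) + ?t (Suc (2 * n)) = 1" for n
      using thue_morse_le_1[of n] by (simp add: thue_morse_double thue_morse_Suc_double)
  qed (use bounded in \<open>simp_all add: Bseq_add_Bseq Bseq_diff_Bseq\<close>)
  moreover have "dirichlet_series (\<lambda>n. ?t (n - 1) + ?t n) s = A + B"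
    unfolding A_def B_def by (rule dirichlet_series_add[OF assms(1) bounded])
  moreover have "dirichlet_series (\<lambda>n. ?t n - ?t (n - 1)) s = B - A"
    unfolding A_def B_def by (rule dirichlet_series_diff[OF assms(1) bounded(2,1)])
  ultimately have "A + B = zeta_series s + (B - A) / 2 powr s"
    by (simp add: zeta_series_conv_dirichlet_series)
  then show ?thesis by (simp add: field_simps)
qed

lemma thue_morse_shifted_relation:
  fixes k l :: real
  assumes "Re s > 1"
  shows "(2 powr s + 1) * (\<Sum>n. complex_of_real (real (thue_morse n) - k) / of_nat (Suc n) powr s)
       + (2 powr s - 1) * (\<Sum>n. complex_of_real (real (thue_morse (Suc n)) + l) / of_nat (Suc n) powr s)
       = (2 powr s - (2 powr s * complex_of_real (k - l) + complex_of_real (k + l))) * zeta_series s"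
proof -
  let ?t = "\<lambda>n. of_nat (thue_morse n) :: complex"
  have "(\<Sum>n. complex_of_real (real (thue_morse n) - k) / of_nat (Suc n) powr s)
      = dirichlet_series (\<lambda>n. ?t (n - 1) - of_real k) s"
    using dirichlet_series_conv_Suc[of "\<lambda>n. ?t (n - 1) - of_real k" s] by simp
  also have "\<dots> = dirichlet_series (\<lambda>n. ?t (n - 1)) s - of_real k * zeta_series s"
    using dirichlet_series_diff[OF assms Bseq_thue_morse[of "\<lambda>n. n - 1"] Bfun_const]
    by (simp add: dirichlet_series_const[OF assms])
  finally have Q: "(\<Sum>n. complex_of_real (real (thue_morse n) - k) / of_nat (Suc n) powr s)
      = dirichlet_series (\<lambda>n. ?t (n - 1)) s - of_real k * zeta_series s" .
  have "(\<Sum>n. complex_of_real (real (thue_morse (Suc n)) + l) / of_nat (Suc n) powr s)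
      = dirichlet_series (\<lambda>n. ?t n + of_real l) s"
    using dirichlet_series_conv_Suc[of "\<lambda>n. ?t n + of_real l" s] by simp
  also have "\<dots> = dirichlet_series ?t s + of_real l * zeta_series s"
    using dirichlet_series_add[OF assms Bseq_thue_morse[of id] Bfun_const]
    by (simp add: dirichlet_series_const[OF assms])
  finally have R: "(\<Sum>n. complex_of_real (real (thue_morse (Suc n)) + l) / of_nat (Suc n) powr s)
      = dirichlet_series ?t s + of_real l * zeta_series s" .
  show ?thesis
    using thue_morse_dirichlet_relation[OF assms] unfolding Q R by (simp add: algebra_simps)
qed

theorem theorem4:
  fixes k l :: real and s :: complex
  assumes "k > 0" and "l > 0" and "Re s > 1"
  defines "q \<equiv> (\<lambda>n. real (thue_morse n) - k)"
      and "r \<equiv> (\<lambda>n. real (thue_morse n) + l)"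
      and "lam \<equiv> 2 powr s - (2 powr s * complex_of_real (k - l) + complex_of_real (k + l))"
  defines "Q \<equiv> (\<Sum>n. complex_of_real (q n) / (of_nat (Suc n) powr s))"
      and "R \<equiv> (\<Sum>n. complex_of_real (r (Suc n)) / (of_nat (Suc n) powr s))"
  shows "(lam = 0 \<longrightarrow> Q = (1 - 2 powr s) / (1 + 2 powr s) * R)
       \<and> (lam = 2 powr s \<longrightarrow> (2 powr s + 1) * Q + (2 powr s - 1) * R = 2 powr s * zeta_series s)
       \<and> (lam = 2 powr s - 2 \<longrightarrow> (2 powr s + 1) * Q + (2 powr s - 1) * R = 2 powr s * eta_series s)"
proof -
  define w where "w = (2::complex) powr s"
  have "norm w > 1"
    using assms(3) by (simp add: w_def norm_two_powr)
  then have "1 + w \<noteq> 0"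
    by (metis add_eq_0_iff norm_minus_cancel norm_one order_less_irrefl)
  have relation: "(w + 1) * Q + (w - 1) * R = lam * zeta_series s"
    using thue_morse_shifted_relation[OF assms(3), of k l]
    unfolding Q_def R_def q_def r_def lam_def w_def .
  have eta: "w * eta_series s = (w - 2) * zeta_series s"
    using eta_series_eq_zeta_series[OF assms(3)] unfolding w_def .
  show ?thesis
    unfolding w_def[symmetric]
  proof (intro conjI impI)
    assume "lam = 0"
    with relation have "(1 + w) * Q = (1 - w) * R" by (simp add: algebra_simps)
    with \<open>1 + w \<noteq> 0\<close> show "Q = (1 - w) / (1 + w) * R" by (simp add: field_simps)
  next
    assume "lam = w"
    with relation show "(w + 1) * Q + (w - 1) * R = w * zeta_series s" by simp
  next
    assume "lam = w - 2"
    with relation eta show "(w + 1) * Q + (w - 1) * R = w * eta_series s" by simp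
  qed
qed

end
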